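(* For every $\varepsilon>0$, $\alpha\geq-\varepsilon$ and $\tau>-1$, the function $r\mapsto r^\alpha\frac{J_{\tau+\varepsilon}(r)}{J_\tau(r)}$ is increasing on $(0,j_\tau)$.
   Context: $J_\tau$ denotes the Bessel function of the first kind of order $\tau$ and $j_\tau$ its first positive zero. *)

theory Defs
  imports "HOL-Analysis.Analysis"
begin

definition besselJ :: "real \<Rightarrow> real \<Rightarrow> real" where
  "besselJ nu x =
     (\<Sum>m. (-1) ^ m / (fact m * Gamma (real m + nu + 1)) * (x / 2) powr (2 * real m + nu))"

definition besselJ_first_zero :: "real \<Rightarrow> real" where
  "besselJ_first_zero nu = Inf {r. 0 < r \<and> besselJ nu r = 0}"

end

theory Submission
  imports Defs
begin

text \<open>Write \<open>J\<^sub>\<nu>(r) = (r/2)\<^sup>\<nu> G\<^sub>\<nu>((r/2)\<^sup>2)\<close> with \<open>G\<^sub>\<nu>\<close> an entire power series.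
  Bessel's equation becomes \<open>(x G\<^sub>\<nu>')' = -\<nu> G\<^sub>\<nu>' - G\<^sub>\<nu>\<close>, so \<open>w = x G\<^sub>\<nu>'/G\<^sub>\<nu>\<close> satisfies the
  Riccati equation \<open>x w' = -k\<close> with \<open>k = x + w\<^sup>2 + \<nu> w\<close>. Since \<open>k\<close> is positive near \<open>0\<close> and
  \<open>k' = 1\<close> at every zero of \<open>k\<close>, \<open>k\<close> stays positive and \<open>w\<close> decreases as long as \<open>G\<^sub>\<nu> > 0\<close>,
  i.e.\ on \<open>[0, (j\<^sub>\<nu>/2)\<^sup>2)\<close>. Hence \<open>G\<^sub>\<nu>(s x)/G\<^sub>\<nu>(x)\<close> increases in \<open>x\<close> for \<open>0 < s < 1\<close>, and by
  Sonine's integral \<open>\<Gamma>(\<epsilon>) G\<^sub>\<nu>\<^sub>+\<^sub>\<epsilon>(x) = \<integral>\<^sub>0\<^sup>1 G\<^sub>\<nu>(s x) s\<^sup>\<nu> (1-s)\<^sup>\<epsilon>\<^sup>-\<^sup>1 ds\<close> so does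
  \<open>G\<^sub>\<nu>\<^sub>+\<^sub>\<epsilon>/G\<^sub>\<nu>\<close>. Finally \<open>r\<^sup>\<alpha> J\<^sub>\<nu>\<^sub>+\<^sub>\<epsilon>(r)/J\<^sub>\<nu>(r) = 2\<^sup>-\<^sup>\<epsilon> r\<^sup>\<alpha>\<^sup>+\<^sup>\<epsilon> (G\<^sub>\<nu>\<^sub>+\<^sub>\<epsilon>/G\<^sub>\<nu>)((r/2)\<^sup>2)\<close>
  and \<open>\<alpha> + \<epsilon> \<ge> 0\<close>.\<close>

lemma has_integral_pos_real:
  fixes f :: "real \<Rightarrow> real"
  assumes f: "(f has_integral I) {a..b}" and nonneg: "\<And>x. x \<in> {a..b} \<Longrightarrow> 0 \<le> f x"
    and cd: "a \<le> c" "c < d" "d \<le> b"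
    and cont: "continuous_on {c..d} f" and pos: "\<And>x. x \<in> {c<..<d} \<Longrightarrow> 0 < f x"
  shows "0 < I"
proof -
  have int_ab: "f integrable_on {a..b}" using f by blast
  have int_cd: "f integrable_on {c..d}"
    using integrable_subinterval_real[OF int_ab] cd by simp
  have "0 < integral {c..d} f"
    using integral_less_real[of c d "\<lambda>_. 0" f] cont pos cd by simp
  also have "\<dots> \<le> integral {a..b} f"
    using cd nonneg by (intro integral_subset_le int_cd int_ab) auto
  also have "\<dots> = I" using f by (rule integral_unique)
  finally show ?thesis .
qed

lemma pos_if_deriv_pos_at_zeros:
  fixes f :: "real \<Rightarrow> real"
  assumes "a \<le> b" and cont: "continuous_on {a..b} f" and fa: "f a > 0"
    and deriv: "\<And>x. x \<in> {a<..b} \<Longrightarrow> f x = 0 \<Longrightarrow> \<exists>l>0. (f has_real_derivative l) (at x)"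
  shows "f b > 0"
proof (rule ccontr)
  have zero_below: "\<exists>z. a \<le> z \<and> z \<le> y \<and> f z = 0" if "a \<le> y" "y \<le> b" "f y \<le> 0" for y
    using IVT2'[of f y 0 a] fa that continuous_on_subset[OF cont, of "{a..y}"] by simp
  define S where "S = {x \<in> {a..b}. f x = 0}"
  assume "\<not> f b > 0"
  then have nonempty: "S \<noteq> {}" using zero_below[of b] \<open>a \<le> b\<close> by (auto simp: S_def)
  have "closed S" unfolding S_def by (rule continuous_closed_preimage_constant[OF cont]) simp
  moreover have "bounded S" unfolding S_def by (rule bounded_subset[OF bounded_closed_interval]) auto
  ultimately have "compact S" by (simp add: compact_eq_bounded_closed)
  then obtain x0 where "x0 \<in> S" and first_zero: "\<And>t. t \<in> S \<Longrightarrow> x0 \<le> t"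
    using compact_attains_inf[OF _ nonempty] by auto
  then have x0: "a \<le> x0" "x0 \<le> b" "f x0 = 0" unfolding S_def by auto
  with fa have "a < x0" by (cases "a = x0") auto
  obtain l where "l > 0" "(f has_real_derivative l) (at x0)" using deriv[of x0] x0 \<open>a < x0\<close> by auto
  then obtain e where e: "e > 0" "\<And>h. h > 0 \<Longrightarrow> h < e \<Longrightarrow> f (x0 - h) < f x0"
    using DERIV_pos_inc_left by blast
  define h where "h = min e (x0 - a) / 2"
  have h: "0 < h" "h < e" "h < x0 - a" using e(1) \<open>a < x0\<close> by (auto simp: h_def)
  define y where "y = x0 - h"
  have y: "a < y" "y < x0" "f y < 0" using h e(2)[OF h(1,2)] x0 by (auto simp: y_def)
  then obtain z where "a \<le> z" "z \<le> y" "f z = 0" using zero_below[of y] x0 by auto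
  then have "z \<in> S" using y x0 by (simp add: S_def)
  with first_zero \<open>z \<le> y\<close> \<open>y < x0\<close> show False by fastforce
qed

definition bessel_coeff :: "real \<Rightarrow> nat \<Rightarrow> real" where
  "bessel_coeff \<nu> m = (-1)^m / (fact m * Gamma (real m + \<nu> + 1))"

definition bessel_series :: "real \<Rightarrow> real \<Rightarrow> real" where
  "bessel_series \<nu> x = (\<Sum>m. bessel_coeff \<nu> m * x^m)"

definition bessel_series_deriv :: "real \<Rightarrow> real \<Rightarrow> real" where
  "bessel_series_deriv \<nu> x = (\<Sum>m. diffs (bessel_coeff \<nu>) m * x^m)"

lemma Gamma_shift_pos: "\<nu> > -1 \<Longrightarrow> Gamma (real m + \<nu> + 1) > 0"
  by (intro Gamma_real_pos) linarith

lemma bessel_coeff_0_pos: "\<nu> > -1 \<Longrightarrow> bessel_coeff \<nu> 0 > 0"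
  unfolding bessel_coeff_def using Gamma_shift_pos[of \<nu> 0] by simp

lemma bessel_coeff_Suc:
  assumes "\<nu> > -1"
  shows "bessel_coeff \<nu> (Suc m) = - bessel_coeff \<nu> m / ((real m + 1) * (real m + \<nu> + 1))"
proof -
  have "real m + \<nu> + 1 \<notin> \<int>\<^sub>\<le>\<^sub>0" using assms by auto
  then have "Gamma (real (Suc m) + \<nu> + 1) = (real m + \<nu> + 1) * Gamma (real m + \<nu> + 1)"
    using Gamma_plus1[of "real m + \<nu> + 1"] by (simp add: add_ac)
  then show ?thesis
    unfolding bessel_coeff_def using Gamma_shift_pos[OF assms, of m] assms
    by (simp add: field_simps)
qed

lemma summable_bessel_coeff:
  assumes "\<nu> > -1"
  shows "summable (\<lambda>m. bessel_coeff \<nu> m * x^m)"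
proof (rule summable_ratio_test[where c="1/2" and N="nat \<lceil>2*\<bar>x\<bar>\<rceil>"])
  fix n assume "n \<ge> nat \<lceil>2*\<bar>x\<bar>\<rceil>"
  then have "2*\<bar>x\<bar> \<le> real n" by linarith
  also have "\<dots> \<le> (real n + 1) * real n" by (simp add: algebra_simps)
  also have "\<dots> \<le> (real n + 1) * (real n + \<nu> + 1)" using assms by (intro mult_left_mono) auto
  finally have ratio: "\<bar>x\<bar> / ((real n + 1) * (real n + \<nu> + 1)) \<le> 1/2"
    using assms by (simp add: divide_simps)
  have "norm (bessel_coeff \<nu> (Suc n) * x ^ Suc n)
      = norm (bessel_coeff \<nu> n * x ^ n) * (\<bar>x\<bar> / ((real n + 1) * (real n + \<nu> + 1)))"
    using assms by (simp add: bessel_coeff_Suc abs_mult abs_divide power_abs)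
  also have "\<dots> \<le> 1/2 * norm (bessel_coeff \<nu> n * x ^ n)"
    using mult_left_mono[OF ratio norm_ge_zero[of "bessel_coeff \<nu> n * x ^ n"]] by (simp add: mult.commute)
  finally show "norm (bessel_coeff \<nu> (Suc n) * x ^ Suc n) \<le> 1/2 * norm (bessel_coeff \<nu> n * x ^ n)" .
qed simp

lemma besselJ_eq_bessel_series:
  assumes "\<nu> > -1" "r > 0"
  shows "besselJ \<nu> r = (r/2) powr \<nu> * bessel_series \<nu> ((r/2)^2)"
proof -
  have "(-1) ^ m / (fact m * Gamma (real m + \<nu> + 1)) * (r / 2) powr (2 * real m + \<nu>)
      = (r/2) powr \<nu> * (bessel_coeff \<nu> m * ((r/2)^2)^m)" for m
  proof -
    have "(r / 2) powr (2 * real m + \<nu>) = (r/2) powr (real (2*m)) * (r/2) powr \<nu>"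
      by (simp add: powr_add)
    also have "(r/2) powr (real (2*m)) = ((r/2)^2)^m"
      using powr_realpow[of "r/2" "2*m"] assms(2) by (simp add: power_mult)
    finally show ?thesis unfolding bessel_coeff_def by simp
  qed
  then show ?thesis
    unfolding besselJ_def bessel_series_def
    using suminf_mult[OF summable_bessel_coeff[OF assms(1)]] by simp
qed

lemma summable_bessel_series_deriv: "\<nu> > -1 \<Longrightarrow> summable (\<lambda>m. diffs (bessel_coeff \<nu>) m * x^m)"
  by (rule termdiff_converges_all) (rule summable_bessel_coeff)

lemma has_field_derivative_bessel_series:
  "\<nu> > -1 \<Longrightarrow> (bessel_series \<nu> has_field_derivative bessel_series_deriv \<nu> x) (at x)"
  unfolding bessel_series_def bessel_series_deriv_def
  by (rule termdiffs_strong_converges_everywhere) (rule summable_bessel_coeff)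

lemma isCont_bessel_series: "\<nu> > -1 \<Longrightarrow> isCont (bessel_series \<nu>) x"
  using has_field_derivative_bessel_series DERIV_isCont by blast

lemma isCont_bessel_series_deriv: "\<nu> > -1 \<Longrightarrow> isCont (bessel_series_deriv \<nu>) x"
  unfolding bessel_series_deriv_def
  by (rule DERIV_isCont, rule termdiffs_strong_converges_everywhere, rule summable_bessel_series_deriv)

lemma diffs_index_times_bessel_coeff:
  assumes "\<nu> > -1"
  shows "diffs (\<lambda>m. real m * bessel_coeff \<nu> m) n = - \<nu> * diffs (bessel_coeff \<nu>) n - bessel_coeff \<nu> n"
proof -
  have "(real n + 1) * (real n + \<nu> + 1) > 0" "real n + \<nu> + 1 > 0" using assms by simp_all
  then show ?thesis
    unfolding diffs_def bessel_coeff_Suc[OF assms] by (simp add: field_simps)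
qed

lemma bessel_series_ode:
  assumes "\<nu> > -1"
  shows "((\<lambda>x. x * bessel_series_deriv \<nu> x) has_field_derivative
           - \<nu> * bessel_series_deriv \<nu> x - bessel_series \<nu> x) (at x)"
proof -
  have sums: "(\<lambda>m. (real m * bessel_coeff \<nu> m) * y^m) sums (y * bessel_series_deriv \<nu> y)" for y
  proof -
    have "(\<lambda>m. y * (diffs (bessel_coeff \<nu>) m * y^m)) sums (y * bessel_series_deriv \<nu> y)"
      unfolding bessel_series_deriv_def
      by (intro sums_mult summable_sums summable_bessel_series_deriv assms)
    then have "(\<lambda>m. (real (Suc m) * bessel_coeff \<nu> (Suc m)) * y^Suc m) sums (y * bessel_series_deriv \<nu> y)"
      by (simp add: diffs_def mult_ac)
    then show ?thesis using sums_Suc_iff[of "\<lambda>m. (real m * bessel_coeff \<nu> m) * y^m"] by simp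
  qed
  then have "(\<lambda>x. x * bessel_series_deriv \<nu> x) = (\<lambda>x. \<Sum>m. (real m * bessel_coeff \<nu> m) * x^m)"
    by (simp add: sums_iff)
  moreover have "((\<lambda>x. \<Sum>m. (real m * bessel_coeff \<nu> m) * x^m) has_field_derivative
      (\<Sum>m. diffs (\<lambda>m. real m * bessel_coeff \<nu> m) m * x^m)) (at x)"
    by (rule termdiffs_strong_converges_everywhere) (use sums in \<open>rule sums_summable\<close>)
  moreover have "(\<lambda>m. diffs (\<lambda>m. real m * bessel_coeff \<nu> m) m * x^m)
      = (\<lambda>m. - \<nu> * (diffs (bessel_coeff \<nu>) m * x^m) - bessel_coeff \<nu> m * x^m)"
    by (simp add: diffs_index_times_bessel_coeff[OF assms] algebra_simps)
  moreover have "(\<lambda>m. - \<nu> * (diffs (bessel_coeff \<nu>) m * x^m) - bessel_coeff \<nu> m * x^m) sums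
      (- \<nu> * bessel_series_deriv \<nu> x - bessel_series \<nu> x)"
    unfolding bessel_series_deriv_def bessel_series_def
    by (intro sums_diff sums_mult summable_sums summable_bessel_series_deriv summable_bessel_coeff assms)
  ultimately show ?thesis by (simp add: sums_iff)
qed

lemma bessel_series_0: "bessel_series \<nu> 0 = bessel_coeff \<nu> 0"
  unfolding bessel_series_def by (rule powser_zero)

lemma bessel_series_deriv_0:
  assumes "\<nu> > -1"
  shows "bessel_series_deriv \<nu> 0 = - bessel_series \<nu> 0 / (\<nu> + 1)"
proof -
  have "bessel_series_deriv \<nu> 0 = bessel_coeff \<nu> 1"
    unfolding bessel_series_deriv_def powser_zero by (simp add: diffs_def)
  then show ?thesis using bessel_coeff_Suc[OF assms, of 0] by (simp add: bessel_series_0)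
qed

definition bessel_log_deriv :: "real \<Rightarrow> real \<Rightarrow> real" where
  "bessel_log_deriv \<nu> x = x * bessel_series_deriv \<nu> x / bessel_series \<nu> x"

definition bessel_riccati :: "real \<Rightarrow> real \<Rightarrow> real" where
  "bessel_riccati \<nu> x = x + (bessel_log_deriv \<nu> x)^2 + \<nu> * bessel_log_deriv \<nu> x"

lemma has_field_derivative_bessel_log_deriv:
  assumes "\<nu> > -1" "x \<noteq> 0" "bessel_series \<nu> x \<noteq> 0"
  shows "(bessel_log_deriv \<nu> has_field_derivative - bessel_riccati \<nu> x / x) (at x)"
proof -
  have "(bessel_log_deriv \<nu> has_field_derivative
      ((- \<nu> * bessel_series_deriv \<nu> x - bessel_series \<nu> x) * bessel_series \<nu> x
        - x * bessel_series_deriv \<nu> x * bessel_series_deriv \<nu> x) / (bessel_series \<nu> x * bessel_series \<nu> x)) (at x)"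
    unfolding bessel_log_deriv_def[abs_def]
    by (rule DERIV_divide[OF bessel_series_ode has_field_derivative_bessel_series]) (use assms in auto)
  moreover have "((- \<nu> * bessel_series_deriv \<nu> x - bessel_series \<nu> x) * bessel_series \<nu> x
        - x * bessel_series_deriv \<nu> x * bessel_series_deriv \<nu> x) / (bessel_series \<nu> x * bessel_series \<nu> x)
      = - bessel_riccati \<nu> x / x"
    unfolding bessel_riccati_def bessel_log_deriv_def using assms
    by (simp add: field_simps power2_eq_square)
  ultimately show ?thesis by simp
qed

lemma has_field_derivative_bessel_riccati:
  assumes "\<nu> > -1" "x \<noteq> 0" "bessel_series \<nu> x \<noteq> 0"
  shows "(bessel_riccati \<nu> has_field_derivative
           1 + (2 * bessel_log_deriv \<nu> x + \<nu>) * (- bessel_riccati \<nu> x / x)) (at x)"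
proof -
  note w = has_field_derivative_bessel_log_deriv[OF assms]
  have "(\<lambda>x. x + bessel_log_deriv \<nu> x * bessel_log_deriv \<nu> x + \<nu> * bessel_log_deriv \<nu> x) = bessel_riccati \<nu>"
    unfolding bessel_riccati_def[abs_def] by (simp add: power2_eq_square)
  moreover have "((\<lambda>x. x + bessel_log_deriv \<nu> x * bessel_log_deriv \<nu> x + \<nu> * bessel_log_deriv \<nu> x)
      has_field_derivative 1 + (- bessel_riccati \<nu> x / x * bessel_log_deriv \<nu> x
        + - bessel_riccati \<nu> x / x * bessel_log_deriv \<nu> x) + \<nu> * (- bessel_riccati \<nu> x / x)) (at x)"
    by (intro DERIV_add DERIV_ident DERIV_mult DERIV_cmult w)
  ultimately show ?thesis by (simp add: algebra_simps)
qed

lemma eventually_bessel_riccati_pos: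
  assumes "\<nu> > -1"
  shows "eventually (\<lambda>x. bessel_riccati \<nu> x > 0) (at_right 0)"
proof -
  define q where "q x = bessel_series_deriv \<nu> x / bessel_series \<nu> x" for x
  define K where "K x = 1 + x * (q x)^2 + \<nu> * q x" for x
  have G0: "bessel_series \<nu> 0 > 0"
    using bessel_coeff_0_pos[OF assms] by (simp add: bessel_series_0)
  have "q 0 = - 1 / (\<nu> + 1)"
    unfolding q_def bessel_series_deriv_0[OF assms] using G0 by simp
  then have "K 0 = 1 / (\<nu> + 1)"
    unfolding K_def using assms by (simp add: field_simps)
  then have "K 0 > 0" using assms by simp
  moreover have "isCont K 0"
    unfolding K_def q_def
    by (intro continuous_intros isCont_bessel_series isCont_bessel_series_deriv assms) (use G0 in auto)
  ultimately have "eventually (\<lambda>x. K x > 0) (at 0)"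
    unfolding isCont_def by (intro order_tendstoD(1))
  moreover have "eventually (\<lambda>x. bessel_series \<nu> x > 0) (at 0)"
    using isCont_bessel_series[OF assms] G0 unfolding isCont_def by (rule order_tendstoD(1))
  ultimately have "eventually (\<lambda>x. K x > 0 \<and> bessel_series \<nu> x > 0) (at_right 0)"
    unfolding eventually_at_split by (auto elim: eventually_conj)
  with eventually_at_right_less[of 0] show ?thesis
  proof eventually_elim
    case (elim x)
    then have "bessel_riccati \<nu> x = x * K x"
      unfolding bessel_riccati_def bessel_log_deriv_def K_def q_def
      by (simp add: field_simps power2_eq_square)
    with elim show ?case by simp
  qed
qed

lemma continuous_on_bessel_series [continuous_intros]:
  assumes "\<nu> > -1" "continuous_on S f"
  shows "continuous_on S (\<lambda>x. bessel_series \<nu> (f x))"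
proof -
  have "continuous_on UNIV (bessel_series \<nu>)"
    using isCont_bessel_series[OF assms(1)] by (intro continuous_at_imp_continuous_on) blast
  then show ?thesis by (rule continuous_on_compose2[OF _ assms(2)]) simp
qed

definition beta_weight :: "real \<Rightarrow> real \<Rightarrow> real \<Rightarrow> real" where
  "beta_weight \<nu> \<epsilon> s = s powr \<nu> * (1 - s) powr (\<epsilon> - 1)"

lemma continuous_on_beta_weight: "0 < a \<Longrightarrow> b < 1 \<Longrightarrow> continuous_on {a..b} (beta_weight \<nu> \<epsilon>)"
  unfolding beta_weight_def by (intro continuous_intros) auto

lemma has_integral_power_beta_weight:
  assumes "\<nu> > -1" "\<epsilon> > 0"
  shows "((\<lambda>s. s^m * beta_weight \<nu> \<epsilon> s) has_integral Beta (real m + \<nu> + 1) \<epsilon>) {0..1}"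
proof -
  have "s^m * beta_weight \<nu> \<epsilon> s = s powr (real m + \<nu> + 1 - 1) * (1 - s) powr (\<epsilon> - 1)"
    if "s \<in> {0..1}" for s
    using that by (cases "s = 0") (auto simp: beta_weight_def powr_add powr_realpow)
  then show ?thesis
    using has_integral_Beta_real[of "real m + \<nu> + 1" \<epsilon>] assms by (subst has_integral_cong) auto
qed

lemma bessel_coeff_times_Beta:
  assumes "\<nu> > -1" "\<epsilon> > 0"
  shows "bessel_coeff \<nu> m * Beta (real m + \<nu> + 1) \<epsilon> = Gamma \<epsilon> * bessel_coeff (\<nu> + \<epsilon>) m"
proof -
  have "real m + \<nu> + 1 + \<epsilon> = real m + (\<nu> + \<epsilon>) + 1" by simp
  then show ?thesis
    unfolding bessel_coeff_def Beta_def using Gamma_shift_pos[OF assms(1), of m] by (simp add: field_simps)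
qed

lemma has_integral_bessel_coeff_term:
  assumes "\<nu> > -1" "\<epsilon> > 0"
  shows "((\<lambda>s. bessel_coeff \<nu> m * (s * x)^m * beta_weight \<nu> \<epsilon> s)
           has_integral Gamma \<epsilon> * bessel_coeff (\<nu> + \<epsilon>) m * x^m) {0..1}"
  using has_integral_mult_right[OF has_integral_power_beta_weight[OF assms, of m], of "bessel_coeff \<nu> m * x^m"]
    bessel_coeff_times_Beta[OF assms, of m]
  by (simp add: power_mult_distrib mult_ac)

lemma abs_bessel_partial_sum_le:
  assumes "\<nu> > -1" "s \<in> {0..1}"
  shows "\<bar>\<Sum>m<k. bessel_coeff \<nu> m * (s * x)^m\<bar> \<le> (\<Sum>m. \<bar>bessel_coeff \<nu> m\<bar> * \<bar>x\<bar>^m)"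
proof -
  have summable: "summable (\<lambda>m. \<bar>bessel_coeff \<nu> m\<bar> * \<bar>x\<bar>^m)"
    using powser_insidea[OF summable_bessel_coeff[OF assms(1), of "\<bar>x\<bar> + 1"], of "\<bar>x\<bar>"]
    by (simp add: abs_mult power_abs)
  have "\<bar>\<Sum>m<k. bessel_coeff \<nu> m * (s * x)^m\<bar> \<le> (\<Sum>m<k. \<bar>bessel_coeff \<nu> m * (s * x)^m\<bar>)"
    by (rule sum_abs)
  also have "\<dots> \<le> (\<Sum>m<k. \<bar>bessel_coeff \<nu> m\<bar> * \<bar>x\<bar>^m)"
  proof (rule sum_mono)
    fix m
    have "\<bar>s\<bar>^m * \<bar>x\<bar>^m \<le> \<bar>x\<bar>^m"
      using assms(2) by (intro mult_left_le_one_le power_le_one) auto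
    then show "\<bar>bessel_coeff \<nu> m * (s * x)^m\<bar> \<le> \<bar>bessel_coeff \<nu> m\<bar> * \<bar>x\<bar>^m"
      by (simp add: abs_mult power_mult_distrib power_abs mult_left_mono)
  qed
  also have "\<dots> \<le> (\<Sum>m. \<bar>bessel_coeff \<nu> m\<bar> * \<bar>x\<bar>^m)"
    by (rule sum_le_suminf[OF summable]) auto
  finally show ?thesis .
qed

lemma bessel_series_sonine:
  assumes "\<nu> > -1" "\<epsilon> > 0"
  shows "((\<lambda>s. bessel_series \<nu> (s * x) * beta_weight \<nu> \<epsilon> s)
           has_integral Gamma \<epsilon> * bessel_series (\<nu> + \<epsilon>) x) {0..1}"
proof -
  define f where "f k s = (\<Sum>m<k. bessel_coeff \<nu> m * (s * x)^m) * beta_weight \<nu> \<epsilon> s" for k s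
  define M where "M = (\<Sum>m. \<bar>bessel_coeff \<nu> m\<bar> * \<bar>x\<bar>^m)"
  have f_integral: "(f k has_integral (\<Sum>m<k. Gamma \<epsilon> * bessel_coeff (\<nu> + \<epsilon>) m * x^m)) {0..1}" for k
    unfolding f_def sum_distrib_right
    by (intro has_integral_sum has_integral_bessel_coeff_term assms) auto
  have dominant: "(\<lambda>s. M * beta_weight \<nu> \<epsilon> s) integrable_on {0..1}"
    using has_integral_mult_right[OF has_integral_power_beta_weight[OF assms, of 0]] by auto
  have bound: "norm (f k s) \<le> M * beta_weight \<nu> \<epsilon> s" if "s \<in> {0..1}" for k s
    using abs_bessel_partial_sum_le[OF assms(1) that, of x k]
    unfolding f_def M_def beta_weight_def by (simp add: abs_mult mult_right_mono)
  have pointwise: "(\<lambda>k. f k s) \<longlonglongrightarrow> bessel_series \<nu> (s * x) * beta_weight \<nu> \<epsilon> s" for s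
    unfolding f_def bessel_series_def
    by (intro tendsto_mult_right summable_LIMSEQ summable_bessel_coeff assms)
  have limit:
    "(\<lambda>s. bessel_series \<nu> (s * x) * beta_weight \<nu> \<epsilon> s) integrable_on {0..1}"
    "(\<lambda>k. integral {0..1} (f k)) \<longlonglongrightarrow> integral {0..1} (\<lambda>s. bessel_series \<nu> (s * x) * beta_weight \<nu> \<epsilon> s)"
    using dominated_convergence[of f "{0..1}" "\<lambda>s. M * beta_weight \<nu> \<epsilon> s"
        "\<lambda>s. bessel_series \<nu> (s * x) * beta_weight \<nu> \<epsilon> s"] f_integral dominant bound pointwise
    by (auto simp: has_integral_integrable)
  have "(\<lambda>k. integral {0..1} (f k)) \<longlonglongrightarrow> Gamma \<epsilon> * bessel_series (\<nu> + \<epsilon>) x"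
  proof -
    have "(\<lambda>k. \<Sum>m<k. Gamma \<epsilon> * (bessel_coeff (\<nu> + \<epsilon>) m * x^m)) \<longlonglongrightarrow> Gamma \<epsilon> * bessel_series (\<nu> + \<epsilon>) x"
      unfolding bessel_series_def sum_distrib_left[symmetric]
      by (intro tendsto_mult_left summable_LIMSEQ summable_bessel_coeff) (use assms in simp)
    then show ?thesis
      using integral_unique[OF f_integral] by (simp add: mult.assoc)
  qed
  with limit(2) have "integral {0..1} (\<lambda>s. bessel_series \<nu> (s * x) * beta_weight \<nu> \<epsilon> s)
      = Gamma \<epsilon> * bessel_series (\<nu> + \<epsilon>) x"
    using LIMSEQ_unique by blast
  with integrable_integral[OF limit(1)] show ?thesis by simp
qed

context
  fixes \<nu> X :: real
  assumes order: "\<nu> > -1"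
    and series_pos: "\<And>x. 0 \<le> x \<Longrightarrow> x < X \<Longrightarrow> bessel_series \<nu> x > 0"
begin

lemma bessel_riccati_pos:
  assumes "0 < x" "x < X"
  shows "bessel_riccati \<nu> x > 0"
proof -
  have riccati_deriv: "(bessel_riccati \<nu> has_field_derivative
      1 + (2 * bessel_log_deriv \<nu> y + \<nu>) * (- bessel_riccati \<nu> y / y)) (at y)"
    if "0 < y" "y \<le> x" for y
    using has_field_derivative_bessel_riccati[OF order, of y] series_pos[of y] that assms by simp
  obtain b where b: "b > 0" "\<And>y. 0 < y \<Longrightarrow> y < b \<Longrightarrow> bessel_riccati \<nu> y > 0"
    using eventually_bessel_riccati_pos[OF order] unfolding eventually_at_right_field by auto
  define a where "a = min b x / 2"
  have a: "0 < a" "a \<le> x" "bessel_riccati \<nu> a > 0" using b assms by (auto simp: a_def)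
  have "isCont (bessel_riccati \<nu>) y" if "y \<in> {a..x}" for y
    using riccati_deriv[of y] that a by (intro DERIV_isCont) simp
  then have cont: "continuous_on {a..x} (bessel_riccati \<nu>)"
    by (intro continuous_at_imp_continuous_on) blast
  have "\<exists>l>0. (bessel_riccati \<nu> has_real_derivative l) (at y)"
    if "y \<in> {a<..x}" "bessel_riccati \<nu> y = 0" for y
    using riccati_deriv[of y] that a by (intro exI[of _ 1]) simp
  then show ?thesis by (rule pos_if_deriv_pos_at_zeros[OF a(2) cont a(3)])
qed

lemma bessel_log_deriv_strict_antimono:
  assumes "0 < x" "x < y" "y < X"
  shows "bessel_log_deriv \<nu> y < bessel_log_deriv \<nu> x"
proof (rule DERIV_neg_imp_decreasing_open[OF assms(2)])
  fix z assume "x < z" "z < y"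
  then have "0 < z" "z < X" using assms by auto
  then have "(bessel_log_deriv \<nu> has_real_derivative - bessel_riccati \<nu> z / z) (at z)"
    "- bessel_riccati \<nu> z / z < 0"
    using has_field_derivative_bessel_log_deriv[OF order, of z] series_pos[of z] bessel_riccati_pos[of z]
    by simp_all
  then show "\<exists>l. (bessel_log_deriv \<nu> has_real_derivative l) (at z) \<and> l < 0" by blast
next
  have "isCont (bessel_log_deriv \<nu>) z" if "z \<in> {x..y}" for z
    using has_field_derivative_bessel_log_deriv[OF order, of z] series_pos[of z] that assms
    by (intro DERIV_isCont) simp
  then show "continuous_on {x..y} (bessel_log_deriv \<nu>)"
    by (intro continuous_at_imp_continuous_on) blast
qed

lemma bessel_series_dilation_ratio_strict_mono:
  assumes s: "0 < s" "s < 1" and xy: "0 < x" "x < y" "y < X"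
  shows "bessel_series \<nu> (s * x) / bessel_series \<nu> x < bessel_series \<nu> (s * y) / bessel_series \<nu> y"
proof (rule DERIV_pos_imp_increasing_open[OF xy(2)])
  fix z assume "x < z" "z < y"
  then have z: "0 < z" "z < X" "0 < s * z" "s * z < z" using s xy by auto
  then have G: "bessel_series \<nu> z > 0" "bessel_series \<nu> (s * z) > 0" using series_pos by auto
  have "((\<lambda>z. bessel_series \<nu> (s * z) / bessel_series \<nu> z) has_field_derivative
      ((bessel_series_deriv \<nu> (s * z) * s) * bessel_series \<nu> z
        - bessel_series \<nu> (s * z) * bessel_series_deriv \<nu> z) / (bessel_series \<nu> z * bessel_series \<nu> z)) (at z)"
    by (rule DERIV_divide[OF DERIV_chain2[OF has_field_derivative_bessel_series[OF order]]
          has_field_derivative_bessel_series[OF order]])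
       (use G in \<open>auto intro!: derivative_eq_intros\<close>)
  moreover have "bessel_log_deriv \<nu> z < bessel_log_deriv \<nu> (s * z)"
    using bessel_log_deriv_strict_antimono[of "s * z" z] z by simp
  then have "z * (bessel_series_deriv \<nu> z * bessel_series \<nu> (s * z))
      < z * (s * bessel_series_deriv \<nu> (s * z) * bessel_series \<nu> z)"
    unfolding bessel_log_deriv_def using G by (simp add: field_simps)
  then have "0 < ((bessel_series_deriv \<nu> (s * z) * s) * bessel_series \<nu> z
        - bessel_series \<nu> (s * z) * bessel_series_deriv \<nu> z) / (bessel_series \<nu> z * bessel_series \<nu> z)"
    using G z by (simp add: algebra_simps)
  ultimately show "\<exists>l. ((\<lambda>z. bessel_series \<nu> (s * z) / bessel_series \<nu> z) has_real_derivative l) (at z) \<and> 0 < l"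
    by blast
next
  have "isCont (\<lambda>z. bessel_series \<nu> (s * z) / bessel_series \<nu> z) z" if "z \<in> {x..y}" for z
    using series_pos[of z] that xy
    by (intro continuous_intros isCont_bessel_series order isCont_o2[OF _ isCont_bessel_series[OF order]]) auto
  then show "continuous_on {x..y} (\<lambda>z. bessel_series \<nu> (s * z) / bessel_series \<nu> z)"
    by (intro continuous_at_imp_continuous_on) blast
qed

lemma bessel_series_shift_pos:
  assumes "\<epsilon> > 0" "0 \<le> x" "x < X"
  shows "bessel_series (\<nu> + \<epsilon>) x > 0"
proof -
  have dilation_pos: "bessel_series \<nu> (s * x) > 0" if "s \<in> {0..1}" for s
  proof -
    have "s * x \<le> x" using mult_left_le_one_le[of x s] that assms by simp
    moreover have "0 \<le> s * x" using that assms by simp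
    ultimately show ?thesis using series_pos assms by simp
  qed
  have "0 < Gamma \<epsilon> * bessel_series (\<nu> + \<epsilon>) x"
  proof (rule has_integral_pos_real[OF bessel_series_sonine[OF order assms(1)], where c="1/4" and d="3/4"])
    show "0 \<le> bessel_series \<nu> (s * x) * beta_weight \<nu> \<epsilon> s" if "s \<in> {0..1}" for s
      using dilation_pos[OF that] by (simp add: beta_weight_def)
    show "0 < bessel_series \<nu> (s * x) * beta_weight \<nu> \<epsilon> s" if "s \<in> {1/4<..<3/4}" for s
      using dilation_pos[of s] that by (simp add: beta_weight_def)
    show "continuous_on {1/4..3/4} (\<lambda>s. bessel_series \<nu> (s * x) * beta_weight \<nu> \<epsilon> s)"
      by (intro continuous_intros continuous_on_beta_weight order) auto
  qed simp_all
  then show ?thesis using Gamma_real_pos[OF assms(1)] by (simp add: zero_less_mult_iff)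
qed

lemma bessel_series_shift_ratio_strict_mono:
  assumes "\<epsilon> > 0" "0 < x" "x < y" "y < X"
  shows "bessel_series (\<nu> + \<epsilon>) x / bessel_series \<nu> x < bessel_series (\<nu> + \<epsilon>) y / bessel_series \<nu> y"
proof -
  have G: "bessel_series \<nu> x > 0" "bessel_series \<nu> y > 0" using series_pos assms by auto
  define D where "D s = (bessel_series \<nu> (s * y) / bessel_series \<nu> y
      - bessel_series \<nu> (s * x) / bessel_series \<nu> x) * beta_weight \<nu> \<epsilon> s" for s
  have D_pos: "D s > 0" if "0 < s" "s < 1" for s
    using bessel_series_dilation_ratio_strict_mono[of s x y] that assms
    unfolding D_def by (simp add: beta_weight_def)
  have "((\<lambda>s. bessel_series \<nu> (s * y) * beta_weight \<nu> \<epsilon> s / bessel_series \<nu> y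
        - bessel_series \<nu> (s * x) * beta_weight \<nu> \<epsilon> s / bessel_series \<nu> x) has_integral
      Gamma \<epsilon> * bessel_series (\<nu> + \<epsilon>) y / bessel_series \<nu> y
        - Gamma \<epsilon> * bessel_series (\<nu> + \<epsilon>) x / bessel_series \<nu> x) {0..1}"
    by (intro has_integral_diff has_integral_divide bessel_series_sonine order assms)
  moreover have "(\<lambda>s. bessel_series \<nu> (s * y) * beta_weight \<nu> \<epsilon> s / bessel_series \<nu> y
        - bessel_series \<nu> (s * x) * beta_weight \<nu> \<epsilon> s / bessel_series \<nu> x) = D"
    unfolding D_def by (auto simp: field_simps)
  ultimately have integral: "(D has_integral
      Gamma \<epsilon> * bessel_series (\<nu> + \<epsilon>) y / bessel_series \<nu> y
        - Gamma \<epsilon> * bessel_series (\<nu> + \<epsilon>) x / bessel_series \<nu> x) {0..1}"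
    by simp
  have "0 < Gamma \<epsilon> * bessel_series (\<nu> + \<epsilon>) y / bessel_series \<nu> y
        - Gamma \<epsilon> * bessel_series (\<nu> + \<epsilon>) x / bessel_series \<nu> x"
  proof (rule has_integral_pos_real[OF integral, where c="1/4" and d="3/4"])
    show "0 \<le> D s" if "s \<in> {0..1}" for s
      using D_pos[of s] that G by (cases "s = 0 \<or> s = 1") (auto simp: D_def beta_weight_def)
    show "continuous_on {1/4..3/4} D"
      unfolding D_def using G
      by (intro continuous_intros continuous_on_beta_weight order) auto
    show "0 < D s" if "s \<in> {1/4<..<3/4}" for s
      using D_pos that by simp
  qed simp_all
  then have "Gamma \<epsilon> * (bessel_series (\<nu> + \<epsilon>) x / bessel_series \<nu> x)
      < Gamma \<epsilon> * (bessel_series (\<nu> + \<epsilon>) y / bessel_series \<nu> y)"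
    by (simp only: times_divide_eq_right diff_gt_0_iff_gt)
  then show ?thesis
    using Gamma_real_pos[OF assms(1)] by (simp only: mult_less_cancel_left_pos)
qed

end

lemma besselJ_nonzero_below_first_zero:
  assumes "0 < r" "r < besselJ_first_zero \<nu>"
  shows "besselJ \<nu> r \<noteq> 0"
proof
  assume "besselJ \<nu> r = 0"
  moreover have "bdd_below {r. 0 < r \<and> besselJ \<nu> r = 0}"
    by (rule bdd_belowI[of _ 0]) auto
  ultimately have "besselJ_first_zero \<nu> \<le> r"
    using assms(1) unfolding besselJ_first_zero_def by (intro cInf_lower) auto
  with assms(2) show False by simp
qed

lemma bessel_series_pos_below_first_zero:
  assumes "\<nu> > -1" "0 < besselJ_first_zero \<nu>" "0 \<le> x" "x < (besselJ_first_zero \<nu> / 2)^2"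
  shows "bessel_series \<nu> x > 0"
proof (rule ccontr)
  have nonzero: "bessel_series \<nu> y \<noteq> 0" if "0 < y" "y \<le> x" for y
  proof -
    define r where "r = 2 * sqrt y"
    have "sqrt y < sqrt ((besselJ_first_zero \<nu> / 2)^2)"
      using that assms(4) by (intro real_sqrt_less_mono) simp
    then have "0 < r" "r < besselJ_first_zero \<nu>" "(r/2)^2 = y"
      using that assms(2) by (simp_all add: r_def)
    then show ?thesis
      using besselJ_nonzero_below_first_zero besselJ_eq_bessel_series[OF assms(1)] by force
  qed
  have G0: "bessel_series \<nu> 0 > 0"
    using bessel_coeff_0_pos[OF assms(1)] by (simp add: bessel_series_0)
  assume "\<not> bessel_series \<nu> x > 0"
  moreover have "continuous_on {0..x} (bessel_series \<nu>)"
    using isCont_bessel_series[OF assms(1)] by (intro continuous_at_imp_continuous_on) blast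
  ultimately obtain z where "0 \<le> z" "z \<le> x" "bessel_series \<nu> z = 0"
    using IVT2'[of "bessel_series \<nu>" x 0 0] G0 assms(3) by auto
  with nonzero[of z] G0 show False by (cases "z = 0") auto
qed

lemma besselJ_shift_ratio_eq:
  assumes "\<nu> > -1" "\<epsilon> > 0" "r > 0"
  shows "r powr \<alpha> * besselJ (\<nu> + \<epsilon>) r / besselJ \<nu> r
     = r powr (\<alpha> + \<epsilon>) / 2 powr \<epsilon> * (bessel_series (\<nu> + \<epsilon>) ((r/2)^2) / bessel_series \<nu> ((r/2)^2))"
proof -
  have "(r/2) powr \<nu> > 0" using assms(3) by simp
  then have "r powr \<alpha> * besselJ (\<nu> + \<epsilon>) r / besselJ \<nu> r
      = (r powr \<alpha> * (r/2) powr \<epsilon>) * (bessel_series (\<nu> + \<epsilon>) ((r/2)^2) / bessel_series \<nu> ((r/2)^2))"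
    using besselJ_eq_bessel_series[of "\<nu> + \<epsilon>" r] besselJ_eq_bessel_series[of \<nu> r] assms
    by (simp add: powr_add field_simps)
  also have "r powr \<alpha> * (r/2) powr \<epsilon> = r powr (\<alpha> + \<epsilon>) / 2 powr \<epsilon>"
    using assms(3) by (simp add: powr_divide powr_add)
  finally show ?thesis .
qed

theorem lemmaA1:
  fixes \<epsilon> \<alpha> \<tau> :: real
  assumes "\<epsilon> > 0" and "\<alpha> \<ge> - \<epsilon>" and "\<tau> > -1"
  shows "strict_mono_on {0<..<besselJ_first_zero \<tau>}
           (\<lambda>r. r powr \<alpha> * besselJ (\<tau> + \<epsilon>) r / besselJ \<tau> r)"
proof (rule strict_mono_onI)
  fix r1 r2 assume r: "r1 \<in> {0<..<besselJ_first_zero \<tau>}" "r2 \<in> {0<..<besselJ_first_zero \<tau>}" "r1 < r2"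
  define X where "X = (besselJ_first_zero \<tau> / 2)^2"
  have series_pos: "bessel_series \<tau> x > 0" if "0 \<le> x" "x < X" for x
    using bessel_series_pos_below_first_zero[OF assms(3)] r that unfolding X_def by auto
  have x: "0 < (r1/2)^2" "(r1/2)^2 < (r2/2)^2" "(r2/2)^2 < X"
    using r unfolding X_def by (auto intro!: power_strict_mono)
  have ratio_less: "bessel_series (\<tau> + \<epsilon>) ((r1/2)^2) / bessel_series \<tau> ((r1/2)^2)
      < bessel_series (\<tau> + \<epsilon>) ((r2/2)^2) / bessel_series \<tau> ((r2/2)^2)"
    using bessel_series_shift_ratio_strict_mono[OF assms(3) series_pos assms(1) x] by simp
  have ratio_pos: "0 < bessel_series (\<tau> + \<epsilon>) ((r1/2)^2) / bessel_series \<tau> ((r1/2)^2)"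
    using bessel_series_shift_pos[OF assms(3) series_pos assms(1)] series_pos x by simp
  have power_le: "r1 powr (\<alpha> + \<epsilon>) / 2 powr \<epsilon> \<le> r2 powr (\<alpha> + \<epsilon>) / 2 powr \<epsilon>"
    using r assms(2) by (intro divide_right_mono powr_mono2) auto
  have "r1 powr (\<alpha> + \<epsilon>) / 2 powr \<epsilon> > 0" using r by simp
  with mult_le_less_imp_less[OF power_le ratio_less] ratio_pos
  show "r1 powr \<alpha> * besselJ (\<tau> + \<epsilon>) r1 / besselJ \<tau> r1
      < r2 powr \<alpha> * besselJ (\<tau> + \<epsilon>) r2 / besselJ \<tau> r2"
    using r by (simp only: besselJ_shift_ratio_eq[OF assms(3,1)] greaterThanLessThan_iff less_imp_le)
qed

end
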